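(* Let $v$ be an aperiodic infinite word over $\{0,1\}$, with $h(\ell)$ the number of $1$'s among its first $\ell$ digits. If $$\liminf_{\ell\to\infty}\frac{h(\ell)}{\ell}>\frac{\ln2}{\ln3},$$ then $\Phi_{\mathbb{R}}(v)$ exists and $\Phi_{\mathbb{R}}(v)<-1$.
   Context: For an infinite word $v$ over $\{0,1\}$ whose $1$'s are at positions $d_0<d_1<\cdots$ (counted from $0$), $\Phi_{\mathbb{R}}(v)$ is the real sum $-\sum_{i\ge0}2^{d_i}/3^{i+1}$; it exists if the series converges in $\mathbb{R}$. Aperiodic means not eventually periodic. *)

theory Defs
  imports "HOL-Analysis.Analysis" "HOL-Library.Extended_Real"
begin

text \<open>Infinite binary words are functions nat => bool; True encodes the digit 1.\<close>

definition eventually_periodic :: "(nat \<Rightarrow> bool) \<Rightarrow> bool" where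
  "eventually_periodic v \<longleftrightarrow> (\<exists>N p. p > 0 \<and> (\<forall>n\<ge>N. v (n + p) = v n))"

definition aperiodic :: "(nat \<Rightarrow> bool) \<Rightarrow> bool" where
  "aperiodic v \<longleftrightarrow> \<not> eventually_periodic v"

definition ones_count :: "(nat \<Rightarrow> bool) \<Rightarrow> nat \<Rightarrow> nat" where
  "ones_count v l = card {i. i < l \<and> v i}"

text \<open>Position d_i of the i-th 1 (counted from 0).\<close>
definition one_pos :: "(nat \<Rightarrow> bool) \<Rightarrow> nat \<Rightarrow> nat" where
  "one_pos v i = enumerate {j. v j} i"

definition Phi_term :: "(nat \<Rightarrow> bool) \<Rightarrow> nat \<Rightarrow> real" where
  "Phi_term v i = (if infinite {j. v j} \<or> i < card {j. v j}
                   then - (2 ^ one_pos v i) / 3 ^ (i + 1) else 0)"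

definition Phi_R_exists :: "(nat \<Rightarrow> bool) \<Rightarrow> bool" where
  "Phi_R_exists v \<longleftrightarrow> summable (Phi_term v)"

definition Phi_R :: "(nat \<Rightarrow> bool) \<Rightarrow> real" where
  "Phi_R v = (\<Sum>i. Phi_term v i)"

end

theory Submission
  imports Defs
begin

text \<open>Pick \<alpha> strictly between ln 2 / ln 3 and the lower density of the 1's. Then the i-th 1 sits
  at a position d_i < (i + 1) / \<alpha> for large i, so the terms 2^d_i / 3^(i+1) are dominated by a
  geometric series of ratio 2 powr (1/\<alpha>) / 3 < 1. On the other hand d_i \<ge> i, with strict
  inequality somewhere unless v is constantly 1, and the series of 2^i / 3^(i+1) sums to 1.\<close>

lemma eventually_less_if_less_Liminf_ratio:
  fixes f :: "nat \<Rightarrow> real"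
  assumes "ereal \<alpha> < Liminf sequentially (\<lambda>l. ereal (f l / real l))" and "0 \<le> \<alpha>"
  shows "eventually (\<lambda>l. \<alpha> * real l < f l) sequentially"
proof -
  have "eventually (\<lambda>l. \<alpha> < f l / real l) sequentially"
    using less_LiminfD[OF assms(1)] by simp
  then show ?thesis
    using assms(2) by (auto elim!: eventually_mono simp: less_divide_eq mult.commute split: if_splits)
qed

lemma ones_count_le_card:
  assumes "finite {j. v j}"
  shows "ones_count v l \<le> card {j. v j}"
  unfolding ones_count_def using assms by (intro card_mono) auto

lemma infinite_ones_if_positive_density:
  assumes "\<alpha> > 0" and "eventually (\<lambda>l. \<alpha> * real l < real (ones_count v l)) sequentially"
  shows "infinite {j. v j}"
proof
  assume fin: "finite {j. v j}"
  from assms(2) obtain N where N: "\<And>l. l \<ge> N \<Longrightarrow> \<alpha> * real l < real (ones_count v l)"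
    by (auto simp: eventually_sequentially)
  obtain m :: nat where m: "real (card {j. v j}) / \<alpha> < real m"
    using reals_Archimedean2 by blast
  define l where "l = max m N"
  have l: "real (card {j. v j}) / \<alpha> < real l" "N \<le> l"
    using m by (auto simp: l_def)
  have "real (card {j. v j}) < \<alpha> * real l"
    using l(1) assms(1) by (simp add: field_simps)
  also have "\<dots> < real (ones_count v l)" using N[OF l(2)] .
  finally show False using ones_count_le_card[OF fin, of l] by linarith
qed

lemma ones_count_Suc_one_pos:
  assumes "infinite {j. v j}"
  shows "ones_count v (one_pos v i + 1) = i + 1"
proof -
  have "{j. j < one_pos v i + 1 \<and> v j} = one_pos v ` {..i}"
  proof (intro equalityI subsetI)
    fix j assume j: "j \<in> {j. j < one_pos v i + 1 \<and> v j}"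
    then obtain k where k: "one_pos v k = j"
      using enumerate_Ex[OF assms] by (auto simp: one_pos_def)
    have "k \<le> i"
      using j k enumerate_mono_le_iff[OF assms, of k i] by (simp add: one_pos_def)
    then show "j \<in> one_pos v ` {..i}" using k by auto
  qed (use assms enumerate_in_set in \<open>auto simp: one_pos_def less_Suc_eq_le\<close>)
  moreover have "inj (one_pos v)"
    using assms by (intro strict_mono_imp_inj_on) (simp add: strict_mono_def one_pos_def)
  ultimately show ?thesis
    unfolding ones_count_def by (simp add: card_image inj_on_subset)
qed

lemma one_pos_bound_if_density:
  assumes "infinite {j. v j}" and "0 \<le> \<alpha>"
    and "eventually (\<lambda>l. \<alpha> * real l < real (ones_count v l)) sequentially"
  shows "eventually (\<lambda>i. \<alpha> * real (one_pos v i) \<le> real i + 1) sequentially"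
proof -
  obtain N where N: "\<And>l. N \<le> l \<Longrightarrow> \<alpha> * real l < real (ones_count v l)"
    using assms(3) by (auto simp: eventually_sequentially)
  have "\<alpha> * real (one_pos v i) \<le> real i + 1" if "N \<le> i" for i
  proof -
    have "N \<le> one_pos v i + 1"
      using that le_enumerate[OF assms(1), of i] by (simp add: one_pos_def)
    from N[OF this] show ?thesis
      using assms(2) ones_count_Suc_one_pos[OF assms(1), of i] by (simp add: algebra_simps)
  qed
  then show ?thesis by (auto simp: eventually_sequentially)
qed

lemma enumerate_gt_if_not_in:
  fixes S :: "nat set"
  assumes "infinite S" and "n \<notin> S"
  shows "n < enumerate S n"
  using le_enumerate[OF assms(1), of n] enumerate_in_set[OF assms(1), of n] assms(2)
  by (cases "n = enumerate S n") auto

lemma aperiodic_not_all_ones: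
  assumes "aperiodic v"
  shows "\<exists>j. \<not> v j"
proof (rule ccontr)
  assume "\<not> (\<exists>j. \<not> v j)"
  then have "eventually_periodic v"
    unfolding eventually_periodic_def by (intro exI[of _ 0] exI[of _ 1]) auto
  with assms show False by (simp add: aperiodic_def)
qed

lemma Phi_term_infinite:
  assumes "infinite {j. v j}"
  shows "Phi_term v i = - (2 ^ one_pos v i / 3 ^ (i + 1))"
  using assms by (simp add: Phi_term_def)

lemma summable_pow2_div_pow3:
  fixes d :: "nat \<Rightarrow> nat"
  assumes "ln 2 / ln 3 < \<alpha>"
    and "eventually (\<lambda>i. \<alpha> * real (d i) \<le> real i + c) sequentially"
  shows "summable (\<lambda>i. 2 ^ d i / 3 ^ i :: real)"
proof -
  have "\<alpha> > 0" by (rule order.strict_trans[OF _ assms(1)]) simp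
  define q where "q = 2 powr (1 / \<alpha>) / 3"
  have "1 / \<alpha> * ln 2 < ln 3"
    using assms(1) \<open>\<alpha> > 0\<close> by (simp add: field_simps)
  then have "2 powr (1 / \<alpha>) < 3"
    by (metis exp_less_cancel_iff exp_ln powr_def zero_less_numeral)
  then have q: "0 \<le> q" "q < 1" by (auto simp: q_def)
  have bound: "2 ^ d i / 3 ^ i \<le> 2 powr (c / \<alpha>) * q ^ i"
    if "\<alpha> * real (d i) \<le> real i + c" for i
  proof -
    have "(2::real) ^ d i = 2 powr real (d i)" by (simp add: powr_realpow)
    also have "\<dots> \<le> 2 powr (c / \<alpha> + 1 / \<alpha> * real i)"
      using that \<open>\<alpha> > 0\<close> by (intro powr_mono) (auto simp: field_simps)
    also have "\<dots> = 2 powr (c / \<alpha>) * (2 powr (1 / \<alpha>)) powr real i"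
      by (simp add: powr_add powr_powr)
    also have "\<dots> = 2 powr (c / \<alpha>) * (2 powr (1 / \<alpha>)) ^ i"
      by (simp add: powr_realpow)
    finally show ?thesis by (simp add: q_def field_simps)
  qed
  have "summable (\<lambda>i. 2 powr (c / \<alpha>) * q ^ i)"
    using q by (intro summable_mult summable_geometric) simp
  then show ?thesis
    by (rule summable_comparison_test_ev[rotated])
       (use assms(2) in \<open>auto elim!: eventually_mono intro: bound\<close>)
qed

lemma suminf_pow2_div_pow3_gt_1:
  fixes d :: "nat \<Rightarrow> nat"
  assumes "summable (\<lambda>i. 2 ^ d i / 3 ^ (i + 1) :: real)"
    and "\<And>i. i \<le> d i" and "i < d i"
  shows "1 < (\<Sum>i. 2 ^ d i / 3 ^ (i + 1) :: real)"
proof -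
  let ?f = "\<lambda>i. 2 ^ d i / 3 ^ (i + 1) :: real" and ?g = "\<lambda>i. 2 ^ i / 3 ^ (i + 1) :: real"
  have "(\<lambda>i. (2 / 3) ^ i / 3 :: real) sums ((1 / (1 - 2 / 3)) / 3)"
    by (intro sums_divide geometric_sums) simp
  then have g: "?g sums 1" by (simp add: power_divide mult.commute)
  have "0 < (\<Sum>i. ?f i - ?g i)"
  proof (subst suminf_pos_iff)
    show "summable (\<lambda>i. ?f i - ?g i)"
      using assms(1) g by (intro summable_diff) (auto simp: sums_iff)
    show "0 \<le> ?f j - ?g j" for j
      using assms(2)[of j] by (simp add: divide_right_mono)
    show "\<exists>j. 0 < ?f j - ?g j"
      using assms(3) by (intro exI[of _ i]) (simp add: divide_strict_right_mono)
  qed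
  also have "\<dots> = (\<Sum>i. ?f i) - 1"
    using suminf_diff[OF assms(1), of ?g] g by (simp add: sums_iff)
  finally show ?thesis by simp
qed

theorem lemma23:
  fixes v :: "nat \<Rightarrow> bool"
  assumes "aperiodic v"
    and "Liminf sequentially (\<lambda>l. ereal (real (ones_count v l) / real l)) > ereal (ln 2 / ln 3)"
  shows "Phi_R_exists v \<and> Phi_R v < -1"
proof -
  obtain \<alpha> where \<alpha>: "ln 2 / ln 3 < \<alpha>"
    and "ereal \<alpha> < Liminf sequentially (\<lambda>l. ereal (real (ones_count v l) / real l))"
    using ereal_dense2[OF assms(2)] by auto
  moreover have "\<alpha> > 0" by (rule order.strict_trans[OF _ \<alpha>]) simp
  ultimately have density: "eventually (\<lambda>l. \<alpha> * real l < real (ones_count v l)) sequentially"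
    by (intro eventually_less_if_less_Liminf_ratio) auto
  have inf: "infinite {j. v j}"
    using \<open>\<alpha> > 0\<close> density by (rule infinite_ones_if_positive_density)
  let ?d = "one_pos v"
  have "summable (\<lambda>i. 2 ^ ?d i / 3 ^ i :: real)"
    using \<alpha> one_pos_bound_if_density[OF inf _ density] \<open>\<alpha> > 0\<close>
    by (intro summable_pow2_div_pow3) auto
  then have sum: "summable (\<lambda>i. 2 ^ ?d i / 3 ^ (i + 1) :: real)"
    by (auto dest: summable_divide[where c = 3] simp: mult.commute)
  obtain j where "\<not> v j"
    using aperiodic_not_all_ones[OF assms(1)] by blast
  then have "j < ?d j"
    using enumerate_gt_if_not_in[OF inf] by (simp add: one_pos_def)
  then have "1 < (\<Sum>i. 2 ^ ?d i / 3 ^ (i + 1) :: real)"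
    using le_enumerate[OF inf] by (intro suminf_pow2_div_pow3_gt_1[OF sum]) (auto simp: one_pos_def)
  moreover have "Phi_term v = (\<lambda>i. - (2 ^ ?d i / 3 ^ (i + 1)))"
    using Phi_term_infinite[OF inf] by auto
  ultimately show ?thesis
    using sum by (simp add: Phi_R_exists_def Phi_R_def suminf_minus summable_minus_iff)
qed

end
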